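(* Let $p_{NS}\in(0,1)$ and let $p_0$ be such that $p_{NS}=p_0(1-p_0)^{(1-p_0)/p_0}$. Let $P$ be a probability distribution on a finite set $\mathcal{I}$ with $\min_{i\in\sup(P)}P(i)\ge p_{NS}$. Then for every minimizer $Q^*$ of $\mathrm{KL}_b(P\|\cdot)$ over semi-distributions and every $i\in\sup(Q^* )$, $$\frac{Q^*(i)}{P(i)}\le\frac{p_0}{(1-p_0)p_{NS}}<\frac{3}{1-p_0}.$$
   Context: A semi-distribution on $\mathcal{I}$ is $W:\mathcal{I}\to[0,1]$ with $\sum_iW(i)\le1$ and support $\sup(W)=\{i:W(i)>0\}$; a probability distribution is one summing to $1$. Bounded KL with threshold $p_{NS}$: $\mathrm{KL}_b(P\|Q):=\sum_{i\in\sup(P)}P(i)\ln\frac{P(i)}{\max(Q(i),p_{NS})}$. *)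

theory Defs
  imports Complex_Main
begin

text \<open>Functions on a finite index set I, represented as 'a \<Rightarrow> real;
  only the values on I matter.\<close>

definition semidist :: "'a set \<Rightarrow> ('a \<Rightarrow> real) \<Rightarrow> bool" where
  "semidist I W \<longleftrightarrow> (\<forall>i\<in>I. 0 \<le> W i \<and> W i \<le> 1) \<and> (\<Sum>i\<in>I. W i) \<le> 1"

definition probdist :: "'a set \<Rightarrow> ('a \<Rightarrow> real) \<Rightarrow> bool" where
  "probdist I W \<longleftrightarrow> semidist I W \<and> (\<Sum>i\<in>I. W i) = 1"

definition supp :: "'a set \<Rightarrow> ('a \<Rightarrow> real) \<Rightarrow> 'a set" where
  "supp I W = {i \<in> I. W i > 0}"

definition KLb :: "real \<Rightarrow> 'a set \<Rightarrow> ('a \<Rightarrow> real) \<Rightarrow> ('a \<Rightarrow> real) \<Rightarrow> real" where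
  "KLb pNS I P Q = (\<Sum>i\<in>supp I P. P i * ln (P i / max (Q i) pNS))"

definition KLb_minimizer :: "real \<Rightarrow> 'a set \<Rightarrow> ('a \<Rightarrow> real) \<Rightarrow> ('a \<Rightarrow> real) \<Rightarrow> bool" where
  "KLb_minimizer pNS I P Q \<longleftrightarrow> semidist I Q \<and>
     (\<forall>Q'. semidist I Q' \<longrightarrow> KLb pNS I P Q \<le> KLb pNS I P Q')"

end

theory Submission
  imports Defs
begin

text \<open>Let A be the set where the minimiser Q reaches the threshold pNS and m = P(A).
  Conditioning P on A never increases KL_b (Gibbs' inequality), strictly so unless Q is
  proportional to P on A; hence Q i = P i / m on A. If m were smaller than
  (1 - p0) pNS / p0, conditioning on A together with one more point of the support would
  decrease KL_b further, because x \<mapsto> x (1 - x) powr ((1 - x) / x) is increasing; this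
  bounds Q i / P i = 1 / m. Off A, Q i < pNS \<le> P i. Finally
  (1 - p0) powr ((1 - p0) / p0) > exp (-1) > 1/3 gives the numerical bound.\<close>

definition threshold :: "real \<Rightarrow> real" where
  "threshold x = x * (1 - x) powr ((1 - x) / x)"

lemma ln_threshold:
  assumes "0 < x" "x < 1"
  shows "ln (threshold x) = ln x + (1 - x) / x * ln (1 - x)"
  using assms by (simp add: threshold_def ln_mult ln_powr)

lemma threshold_pos: "0 < x \<Longrightarrow> x < 1 \<Longrightarrow> 0 < threshold x"
  by (simp add: threshold_def)

lemma threshold_le: "0 < x \<Longrightarrow> x < 1 \<Longrightarrow> threshold x \<le> x"
  unfolding threshold_def by (simp add: mult_left_le powr_le1)

lemma one_minus_mul_threshold_less:
  assumes "0 < x" "x < 1"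
  shows "(1 - x) * threshold x < x"
proof -
  have "0 < x * threshold x"
    using assms threshold_pos by simp
  moreover have "(1 - x) * threshold x = threshold x - x * threshold x"
    by (simp add: algebra_simps)
  ultimately show ?thesis
    using threshold_le[OF assms] by linarith
qed

lemma threshold_gt_third:
  assumes "0 < x" "x < 1"
  shows "x / 3 < threshold x"
proof -
  have "ln (1 / (1 - x)) < 1 / (1 - x) - 1"
    using assms ln_le_minus_one[of "1 / (1 - x)"] ln_eq_minus_one[of "1 / (1 - x)"] by force
  then have "- ln (1 - x) < x / (1 - x)"
    using assms by (simp add: ln_div field_simps)
  then have "- 1 < (1 - x) / x * ln (1 - x)"
    using assms by (simp add: field_simps)
  then have "exp (- 1) < (1 - x) powr ((1 - x) / x)"
    using assms by (simp add: powr_def)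
  moreover have "1 / 3 \<le> exp (- 1 :: real)"
    using exp_le by (simp add: exp_minus field_simps)
  ultimately show ?thesis
    using assms by (simp add: threshold_def field_simps)
qed

lemma threshold_strict_mono:
  assumes "0 < a" "a < b" "b < 1"
  shows "threshold a < threshold b"
proof -
  have "ln (threshold a) < ln (threshold b)"
  proof -
    have "\<exists>y. DERIV (\<lambda>x. ln x + (1 - x) / x * ln (1 - x)) x :> y \<and> y > 0"
      if "a \<le> x" "x \<le> b" for x
    proof -
      have x: "0 < x" "x < 1" using that assms by auto
      have "DERIV (\<lambda>x. ln x + (1 - x) / x * ln (1 - x)) x :> - ln (1 - x) / (x * x)"
        using x by (auto intro!: derivative_eq_intros simp: field_simps)
      moreover have "- ln (1 - x) / (x * x) > 0"
        using x by (simp add: divide_neg_pos)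
      ultimately show ?thesis by blast
    qed
    from DERIV_pos_imp_increasing[OF assms(2) this] show ?thesis
      using assms by (simp add: ln_threshold)
  qed
  then show ?thesis
    using assms by (simp add: threshold_pos)
qed

lemma mul_ln_add_less_threshold:
  fixes m p x :: real
  assumes "0 < m" "0 < x" "x < 1" "threshold x \<le> p"
    and small: "m * x < (1 - x) * threshold x"
  shows "(m + p) * ln (m + p) < m * ln m + p * ln (p / threshold x)"
proof -
  \<comment> \<open>With this b, p * ln (threshold b) is exactly the change of cost caused by merging p into m.\<close>
  define b where "b = p / (m + p)"
  have p: "0 < p" using assms threshold_pos[of x] by linarith
  have "m * x < (1 - x) * p"
    using small assms mult_left_mono[OF assms(4), of "1 - x"] by linarith
  then have b: "x < b" "b < 1"
    using assms p by (simp_all add: b_def field_simps)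
  have one_minus_b: "1 - b = m / (m + p)"
    using assms p by (simp add: b_def field_simps)
  have "ln (1 - b) = ln m - ln (m + p)" "(1 - b) / b = m / p"
    using assms p by (simp_all add: one_minus_b ln_div) (simp add: b_def)
  moreover have "ln b = ln p - ln (m + p)"
    using assms p by (simp add: b_def ln_div)
  ultimately have "ln (threshold b) = ln p - ln (m + p) + m / p * (ln m - ln (m + p))"
    using b assms by (simp add: ln_threshold)
  then have "p * ln (threshold b) = p * ln p + m * ln m - (m + p) * ln (m + p)"
    using p by (simp add: field_simps)
  moreover have "p * ln (threshold x) < p * ln (threshold b)"
    using threshold_strict_mono[of x b] threshold_pos[of x] b assms p by simp
  moreover have "p * ln (p / threshold x) = p * ln p - p * ln (threshold x)"
    using p threshold_pos[of x] assms by (simp add: ln_div algebra_simps)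
  ultimately show ?thesis
    by linarith
qed

lemma mul_ln_div_ge:
  fixes m p q :: real
  assumes "0 < m" "0 < p" "0 < q"
  shows "p * ln m + p - m * q \<le> p * ln (p / q)"
    and "m * q \<noteq> p \<Longrightarrow> p * ln m + p - m * q < p * ln (p / q)"
proof -
  have split: "p * ln (p / q) = p * ln m - p * ln (m * q / p)"
    using assms by (simp add: ln_div ln_mult algebra_simps)
  have linear: "p * (m * q / p - 1) = m * q - p"
    using assms by (simp add: field_simps)
  have "ln (m * q / p) \<le> m * q / p - 1"
    using assms by (simp add: ln_le_minus_one)
  from mult_left_mono[OF this, of p] show "p * ln m + p - m * q \<le> p * ln (p / q)"
    using split linear assms by simp
  assume "m * q \<noteq> p"
  then have "ln (m * q / p) < m * q / p - 1"
    using assms ln_le_minus_one[of "m * q / p"] ln_eq_minus_one[of "m * q / p"] by force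
  from mult_strict_left_mono[OF this, of p] show "p * ln m + p - m * q < p * ln (p / q)"
    using split linear assms by simp
qed

lemma sum_mul_ln_div_ge:
  fixes P Q :: "'a \<Rightarrow> real"
  assumes "finite A" "A \<noteq> {}" "\<And>j. j \<in> A \<Longrightarrow> 0 < P j \<and> 0 < Q j" "sum Q A \<le> 1"
  defines "m \<equiv> sum P A"
  shows "m * ln m \<le> (\<Sum>j\<in>A. P j * ln (P j / Q j))"
    and "\<exists>i\<in>A. m * Q i \<noteq> P i \<Longrightarrow> m * ln m < (\<Sum>j\<in>A. P j * ln (P j / Q j))"
proof -
  have m: "0 < m"
    unfolding m_def using assms by (intro sum_pos) auto
  have "m * ln m \<le> (\<Sum>j\<in>A. P j * ln m + P j - m * Q j)"
    using m assms(4) mult_left_mono[OF assms(4), of m]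
    by (simp add: sum.distrib sum_subtractf sum_distrib_left sum_distrib_right m_def)
  moreover have "(\<Sum>j\<in>A. P j * ln m + P j - m * Q j) \<le> (\<Sum>j\<in>A. P j * ln (P j / Q j))"
    using m assms(3) by (intro sum_mono mul_ln_div_ge(1)) auto
  moreover have "(\<Sum>j\<in>A. P j * ln m + P j - m * Q j) < (\<Sum>j\<in>A. P j * ln (P j / Q j))"
    if witness: "\<exists>i\<in>A. m * Q i \<noteq> P i"
  proof -
    obtain i where i: "i \<in> A" "m * Q i \<noteq> P i"
      using witness by blast
    then have "P i * ln m + P i - m * Q i < P i * ln (P i / Q i)"
      using m assms(3) mul_ln_div_ge(2) by blast
    then show ?thesis
      using i m assms(1,3) mul_ln_div_ge(1) by (intro sum_strict_mono_ex1) auto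
  qed
  ultimately show "m * ln m \<le> (\<Sum>j\<in>A. P j * ln (P j / Q j))"
    and "\<exists>i\<in>A. m * Q i \<noteq> P i \<Longrightarrow> m * ln m < (\<Sum>j\<in>A. P j * ln (P j / Q j))"
    by linarith+
qed

lemma probdist_sum_supp:
  assumes "finite I" "probdist I P"
  shows "sum P (supp I P) = 1"
proof -
  have "sum P (supp I P) = sum P I"
    using assms by (intro sum.mono_neutral_left) (auto simp: supp_def probdist_def semidist_def)
  then show ?thesis
    using assms(2) by (simp add: probdist_def)
qed

lemma probdist_sum_le_one:
  assumes "finite I" "probdist I P" "B \<subseteq> supp I P"
  shows "sum P B \<le> 1"
proof -
  have "finite (supp I P)"
    using assms(1) by (simp add: supp_def)
  then have "sum P B \<le> sum P (supp I P)"
    using assms(3) by (intro sum_mono2) (auto simp: supp_def)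
  then show ?thesis
    using probdist_sum_supp[OF assms(1,2)] by simp
qed

definition cond_dist :: "('a \<Rightarrow> real) \<Rightarrow> 'a set \<Rightarrow> 'a \<Rightarrow> real" where
  "cond_dist P B k = (if k \<in> B then P k / sum P B else 0)"

lemma semidist_cond_dist:
  assumes "finite I" "B \<subseteq> I" "\<And>j. j \<in> B \<Longrightarrow> 0 \<le> P j" "0 < sum P B"
  shows "semidist I (cond_dist P B)"
proof -
  have "finite B"
    using assms(1,2) finite_subset by blast
  then have le: "P k \<le> sum P B" if "k \<in> B" for k
    using that assms(3) by (intro member_le_sum) auto
  have "(\<Sum>k\<in>I. cond_dist P B k) = (\<Sum>k\<in>B. P k / sum P B)"
    using assms(1,2) sum.inter_restrict[OF assms(1), of "\<lambda>k. P k / sum P B" B]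
    by (simp add: cond_dist_def Int_absorb1)
  also have "\<dots> = 1"
    using assms(4) by (simp add: sum_divide_distrib[symmetric])
  finally show ?thesis
    using le assms(3,4) by (simp add: semidist_def cond_dist_def)
qed

lemma KLb_cond_dist:
  assumes "finite I" "B \<subseteq> supp I P" "0 < sum P B" "sum P B \<le> 1"
    and "0 \<le> pNS" "\<And>j. j \<in> B \<Longrightarrow> pNS \<le> P j"
  shows "KLb pNS I P (cond_dist P B)
    = sum P B * ln (sum P B) + (\<Sum>j\<in>supp I P - B. P j * ln (P j / pNS))"
proof -
  let ?M = "sum P B" and ?S = "supp I P"
  have "finite ?S"
    using assms(1) by (simp add: supp_def)
  from sum.subset_diff[OF assms(2) this] have split: "KLb pNS I P (cond_dist P B)
    = (\<Sum>j\<in>B. P j * ln (P j / max (cond_dist P B j) pNS))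
      + (\<Sum>j\<in>?S - B. P j * ln (P j / max (cond_dist P B j) pNS))"
    unfolding KLb_def by (simp add: add.commute)
  have "(\<Sum>j\<in>B. P j * ln (P j / max (cond_dist P B j) pNS)) = (\<Sum>j\<in>B. P j * ln ?M)"
  proof (rule sum.cong[OF refl])
    fix j assume "j \<in> B"
    then have "0 < P j" "pNS \<le> P j"
      using assms(2,6) by (auto simp: supp_def)
    moreover have "P j \<le> P j / ?M"
      using calculation assms(3,4) by (simp add: le_divide_eq)
    ultimately have "max (cond_dist P B j) pNS = P j / ?M"
      using \<open>j \<in> B\<close> by (simp add: cond_dist_def)
    then show "P j * ln (P j / max (cond_dist P B j) pNS) = P j * ln ?M"
      using \<open>0 < P j\<close> assms(3) by simp
  qed
  also have "\<dots> = ?M * ln ?M"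
    by (simp add: sum_distrib_right)
  finally have inside: "(\<Sum>j\<in>B. P j * ln (P j / max (cond_dist P B j) pNS)) = ?M * ln ?M" .
  have "(\<Sum>j\<in>?S - B. P j * ln (P j / max (cond_dist P B j) pNS))
      = (\<Sum>j\<in>?S - B. P j * ln (P j / pNS))"
    using assms(5) by (intro sum.cong) (auto simp: cond_dist_def)
  with split inside show ?thesis
    by simp
qed

lemma KLb_split_at_threshold:
  fixes pNS :: real and P Q :: "'a \<Rightarrow> real"
  assumes "finite I"
  defines "A \<equiv> {j \<in> supp I P. pNS \<le> Q j}"
  shows "KLb pNS I P Q
    = (\<Sum>j\<in>A. P j * ln (P j / Q j)) + (\<Sum>j\<in>supp I P - A. P j * ln (P j / pNS))"
proof -
  have "finite (supp I P)" "A \<subseteq> supp I P"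
    using assms by (auto simp: supp_def)
  from sum.subset_diff[OF this(2,1)] have "KLb pNS I P Q
    = (\<Sum>j\<in>A. P j * ln (P j / max (Q j) pNS)) + (\<Sum>j\<in>supp I P - A. P j * ln (P j / max (Q j) pNS))"
    unfolding KLb_def by (simp add: add.commute)
  moreover have "(\<Sum>j\<in>A. P j * ln (P j / max (Q j) pNS)) = (\<Sum>j\<in>A. P j * ln (P j / Q j))"
    by (intro sum.cong) (auto simp: A_def)
  moreover have "(\<Sum>j\<in>supp I P - A. P j * ln (P j / max (Q j) pNS))
      = (\<Sum>j\<in>supp I P - A. P j * ln (P j / pNS))"
    by (intro sum.cong) (auto simp: A_def)
  ultimately show ?thesis
    by simp
qed

lemma KLb_cond_dist_le:
  fixes pNS :: real and P Q :: "'a \<Rightarrow> real"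
  assumes "finite I" "probdist I P" "semidist I Q" "0 < pNS"
    and "\<forall>j\<in>supp I P. pNS \<le> P j"
  defines "A \<equiv> {j \<in> supp I P. pNS \<le> Q j}"
  assumes "A \<noteq> {}"
  shows "KLb pNS I P (cond_dist P A) \<le> KLb pNS I P Q"
    and "\<exists>i\<in>A. sum P A * Q i \<noteq> P i \<Longrightarrow> KLb pNS I P (cond_dist P A) < KLb pNS I P Q"
proof -
  have A: "A \<subseteq> supp I P" "finite A"
    using assms(1) by (auto simp: A_def supp_def)
  have pos: "0 < P j \<and> 0 < Q j" if "j \<in> A" for j
    using that assms(4) by (auto simp: A_def supp_def)
  have "sum Q A \<le> sum Q I"
    using A assms(1,3) by (intro sum_mono2) (auto simp: semidist_def supp_def)
  then have "sum Q A \<le> 1"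
    using assms(3) by (simp add: semidist_def)
  note block = sum_mul_ln_div_ge[OF A(2) assms(7) pos this]
  have "0 < sum P A"
    using A(2) assms(7) pos by (intro sum_pos) auto
  then have "KLb pNS I P (cond_dist P A)
      = sum P A * ln (sum P A) + (\<Sum>j\<in>supp I P - A. P j * ln (P j / pNS))"
    using A(1) assms(1,2,4,5) probdist_sum_le_one by (intro KLb_cond_dist) auto
  moreover have "KLb pNS I P Q
      = (\<Sum>j\<in>A. P j * ln (P j / Q j)) + (\<Sum>j\<in>supp I P - A. P j * ln (P j / pNS))"
    unfolding A_def by (rule KLb_split_at_threshold[OF assms(1)])
  ultimately show "KLb pNS I P (cond_dist P A) \<le> KLb pNS I P Q"
    and "\<exists>i\<in>A. sum P A * Q i \<noteq> P i \<Longrightarrow> KLb pNS I P (cond_dist P A) < KLb pNS I P Q"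
    using block by simp_all
qed

lemma KLb_cond_dist_insert_less:
  assumes "finite I" "probdist I P" "0 < x" "x < 1"
    and "\<forall>j\<in>supp I P. threshold x \<le> P j"
    and "A \<subseteq> supp I P" "A \<noteq> {}" "j \<in> supp I P - A"
    and "sum P A * x < (1 - x) * threshold x"
  shows "KLb (threshold x) I P (cond_dist P (insert j A))
    < KLb (threshold x) I P (cond_dist P A)"
proof -
  let ?t = "threshold x" and ?S = "supp I P"
  let ?R = "\<Sum>k\<in>?S - insert j A. P k * ln (P k / ?t)"
  have "finite ?S"
    using assms(1) by (simp add: supp_def)
  then have fin: "finite ?S" "finite A"
    using assms(6) finite_subset by auto
  have pos: "0 < P k" if "k \<in> ?S" for k
    using that by (simp add: supp_def)
  have m: "0 < sum P A"
    using fin(2) assms(6,7) pos by (intro sum_pos) auto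
  have "KLb ?t I P (cond_dist P A) = sum P A * ln (sum P A) + (\<Sum>k\<in>?S - A. P k * ln (P k / ?t))"
    using assms m probdist_sum_le_one[OF assms(1,2,6)] threshold_pos[of x]
    by (intro KLb_cond_dist) auto
  also have "(\<Sum>k\<in>?S - A. P k * ln (P k / ?t)) = P j * ln (P j / ?t) + ?R"
    unfolding Diff_insert[of ?S j A] by (rule sum.remove) (use assms(8) fin(1) in auto)
  finally have before: "KLb ?t I P (cond_dist P A)
      = sum P A * ln (sum P A) + P j * ln (P j / ?t) + ?R"
    by simp
  have "sum P (insert j A) = sum P A + P j"
    using assms(8) fin(2) by simp
  moreover have "KLb ?t I P (cond_dist P (insert j A))
      = sum P (insert j A) * ln (sum P (insert j A)) + ?R"
    using assms m pos[of j] probdist_sum_le_one[of I P "insert j A"] threshold_pos[of x] fin(2)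
    by (intro KLb_cond_dist) auto
  moreover have "(sum P A + P j) * ln (sum P A + P j)
      < sum P A * ln (sum P A) + P j * ln (P j / ?t)"
    using assms m by (intro mul_ln_add_less_threshold) auto
  ultimately show ?thesis
    using before by simp
qed

lemma KLb_minimizer_le_cond_dist:
  assumes "finite I" "KLb_minimizer pNS I P Q" "B \<subseteq> supp I P" "B \<noteq> {}"
  shows "KLb pNS I P Q \<le> KLb pNS I P (cond_dist P B)"
proof -
  have "finite (supp I P)"
    using assms(1) by (simp add: supp_def)
  then have "finite B"
    using assms(3) finite_subset by blast
  then have "0 < sum P B"
    using assms(3,4) by (intro sum_pos) (auto simp: supp_def)
  then have "semidist I (cond_dist P B)"
    using assms(1,3) by (intro semidist_cond_dist) (auto simp: supp_def)
  then show ?thesis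
    using assms(2) by (simp add: KLb_minimizer_def)
qed

lemma KLb_minimizer_proportional:
  fixes pNS :: real and P Q :: "'a \<Rightarrow> real"
  assumes "finite I" "probdist I P" "0 < pNS" "\<forall>j\<in>supp I P. pNS \<le> P j"
    and "KLb_minimizer pNS I P Q"
  defines "A \<equiv> {j \<in> supp I P. pNS \<le> Q j}"
  assumes "i \<in> A"
  shows "sum P A * Q i = P i"
proof (rule ccontr)
  assume "sum P A * Q i \<noteq> P i"
  moreover have "semidist I Q"
    using assms(5) by (simp add: KLb_minimizer_def)
  ultimately have "KLb pNS I P (cond_dist P A) < KLb pNS I P Q"
    using KLb_cond_dist_le(2)[OF assms(1,2) _ assms(3,4)] assms(7) by (auto simp: A_def)
  moreover have "KLb pNS I P Q \<le> KLb pNS I P (cond_dist P A)"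
    using assms(7) by (intro KLb_minimizer_le_cond_dist[OF assms(1,5)]) (auto simp: A_def)
  ultimately show False
    by simp
qed

lemma KLb_minimizer_mass_ge:
  fixes x :: real and P Q :: "'a \<Rightarrow> real"
  assumes "finite I" "probdist I P" "0 < x" "x < 1"
    and "\<forall>j\<in>supp I P. threshold x \<le> P j"
    and "KLb_minimizer (threshold x) I P Q"
  defines "A \<equiv> {j \<in> supp I P. threshold x \<le> Q j}"
  assumes "A \<noteq> {}"
  shows "(1 - x) * threshold x \<le> x * sum P A"
proof (rule ccontr)
  let ?t = "threshold x" and ?S = "supp I P"
  assume "\<not> (1 - x) * ?t \<le> x * sum P A"
  then have small: "sum P A * x < (1 - x) * ?t"
    by (simp add: mult.commute)
  then have "sum P A * x < 1 * x"
    using one_minus_mul_threshold_less[OF assms(3,4)] by simp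
  then have "sum P A < 1"
    using assms(3) by (simp add: mult_less_cancel_right)
  then have "A \<noteq> ?S"
    using probdist_sum_supp[OF assms(1,2)] by auto
  then obtain j where j: "j \<in> ?S - A"
    by (auto simp: A_def)
  have "A \<subseteq> ?S"
    by (auto simp: A_def)
  have "semidist I Q"
    using assms(6) by (simp add: KLb_minimizer_def)
  have "KLb ?t I P (cond_dist P (insert j A)) < KLb ?t I P (cond_dist P A)"
    using assms(1-5,8) \<open>A \<subseteq> ?S\<close> j small by (intro KLb_cond_dist_insert_less)
  also have "\<dots> \<le> KLb ?t I P Q"
    using KLb_cond_dist_le(1)[OF assms(1,2) \<open>semidist I Q\<close> threshold_pos[OF assms(3,4)] assms(5)]
      assms(8) by (simp add: A_def)
  also have "\<dots> \<le> KLb ?t I P (cond_dist P (insert j A))"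
    using \<open>A \<subseteq> ?S\<close> j by (intro KLb_minimizer_le_cond_dist[OF assms(1,6)]) auto
  finally show False
    by simp
qed

lemma KLb_minimizer_ratio_le:
  assumes "finite I" "probdist I P" "0 < x" "x < 1"
    and "\<forall>j\<in>supp I P. threshold x \<le> P j"
    and "KLb_minimizer (threshold x) I P Q" "i \<in> I"
  shows "Q i / P i \<le> x / ((1 - x) * threshold x)"
proof -
  let ?t = "threshold x" and ?c = "x / ((1 - x) * threshold x)"
  have "0 < ?t" "(1 - x) * ?t < x"
    using threshold_pos[OF assms(3,4)] one_minus_mul_threshold_less[OF assms(3,4)] by simp_all
  then have "0 < (1 - x) * ?t" "1 < ?c"
    using assms(4) by (simp_all add: less_divide_eq)
  consider "P i = 0" | "0 < P i" "Q i < ?t" | "0 < P i" "?t \<le> Q i"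
    using assms(2,7) by (force simp: probdist_def semidist_def)
  then show ?thesis
  proof cases
    case 1
    then show ?thesis
      using \<open>1 < ?c\<close> by simp
  next
    case 2
    moreover have "?t \<le> P i"
      using 2 assms(5,7) by (simp add: supp_def)
    ultimately have "Q i / P i < 1"
      by simp
    with \<open>1 < ?c\<close> show ?thesis
      by simp
  next
    case 3
    let ?m = "sum P {j \<in> supp I P. ?t \<le> Q j}"
    have i: "i \<in> {j \<in> supp I P. ?t \<le> Q j}"
      using 3 assms(7) by (simp add: supp_def)
    have "(1 - x) * ?t \<le> x * ?m"
      using i by (intro KLb_minimizer_mass_ge[OF assms(1-6)]) auto
    then have "Q i * ((1 - x) * ?t) \<le> Q i * (x * ?m)"
      using 3 \<open>0 < ?t\<close> by (intro mult_left_mono) auto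
    also have "\<dots> = x * P i"
      using KLb_minimizer_proportional[OF assms(1,2) \<open>0 < ?t\<close> assms(5,6) i]
      by (simp add: mult.commute)
    finally show ?thesis
      using 3 \<open>0 < (1 - x) * ?t\<close> by (simp add: field_simps)
  qed
qed

theorem lemma11:
  fixes pNS p0 :: real and I :: "'a set" and P Q :: "'a \<Rightarrow> real"
  assumes "0 < pNS" "pNS < 1"
    and "0 < p0" "p0 < 1"
    and "pNS = p0 * (1 - p0) powr ((1 - p0) / p0)"
    and "finite I"
    and "probdist I P"
    and "\<forall>i\<in>supp I P. P i \<ge> pNS"
    and "KLb_minimizer pNS I P Q"
    and "i \<in> supp I Q"
  shows "Q i / P i \<le> p0 / ((1 - p0) * pNS) \<and> p0 / ((1 - p0) * pNS) < 3 / (1 - p0)"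
proof
  have pNS: "pNS = threshold p0"
    using assms(5) by (simp add: threshold_def)
  have "i \<in> I"
    using assms(10) by (simp add: supp_def)
  then show "Q i / P i \<le> p0 / ((1 - p0) * pNS)"
    using KLb_minimizer_ratio_le[OF assms(6,7,3,4)] assms(8,9) by (simp add: pNS)
  have "p0 / pNS < 3"
    using threshold_gt_third[OF assms(3,4)] assms(1) by (simp add: pNS divide_less_eq)
  then have "p0 / pNS / (1 - p0) < 3 / (1 - p0)"
    using assms(4) by (intro divide_strict_right_mono) auto
  then show "p0 / ((1 - p0) * pNS) < 3 / (1 - p0)"
    by (simp add: mult.commute)
qed

end
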